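(* Let $m, n$ be positive integers with $m \mid n$, let $N < 2^n$ be a positive integer, and let $x < 2^m$ be an odd positive integer. Let $x_{\mathrm{minv}}$ be the inverse of $x$ modulo $2^m$. Define $z_0 = 0$ and, for $j = 0, 1, \ldots, \frac{n-2m}{m}$: $N_j = \lfloor N/2^{jm}\rfloor \bmod 2^m$; $\mathsf{ctrl}_j = \big[x_{\mathrm{minv}}\,(N_j - z_j)\big] \bmod 2^m \in [0, 2^m-1]$; $z'_j = z_j + \mathsf{ctrl}_j \cdot x$; and $z_{j+1} = \lfloor z'_j / 2^m\rfloor$. For $j = 0, 1, \ldots, \frac{n-m}{m}$ let $y_j = z_j\cdot 2^{jm} + (N \bmod 2^{jm})$. Then for all $j = 0, 1, \ldots, \frac{n-m}{m}$: (1) $y_j \equiv N \pmod{2^{jm}}$; (2) $0 \le y_j < 2^{jm}\cdot x$; (3) $y_j$ is divisible by $x$. *)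

theory Defs
  imports Main "HOL-Number_Theory.Cong"
begin

definition digit :: "nat \<Rightarrow> int \<Rightarrow> nat \<Rightarrow> int" where
  "digit m N j = (N div 2 ^ (j * m)) mod 2 ^ m"

fun zseq :: "nat \<Rightarrow> int \<Rightarrow> int \<Rightarrow> int \<Rightarrow> nat \<Rightarrow> int" where
  "zseq m N x xminv 0 = 0"
| "zseq m N x xminv (Suc j) =
     (let zj = zseq m N x xminv j;
          ctrl = (xminv * (digit m N j - zj)) mod 2 ^ m
      in (zj + ctrl * x) div 2 ^ m)"

definition ctrl :: "nat \<Rightarrow> int \<Rightarrow> int \<Rightarrow> int \<Rightarrow> nat \<Rightarrow> int" where
  "ctrl m N x xminv j = (xminv * (digit m N j - zseq m N x xminv j)) mod 2 ^ m"

definition yval :: "nat \<Rightarrow> int \<Rightarrow> int \<Rightarrow> int \<Rightarrow> nat \<Rightarrow> int" where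
  "yval m N x xminv j = zseq m N x xminv j * 2 ^ (j * m) + N mod 2 ^ (j * m)"

end

theory Submission
  imports Defs
begin

text \<open>This is Montgomery reduction, one digit at a time. Since ctrl_j is congruent to
  xminv (N_j - z_j) modulo 2^m and x xminv is 1 modulo 2^m, the lowest base-2^m digit of
  z'_j = z_j + ctrl_j x is exactly N_j; hence dropping that digit and reattaching it as
  the next digit of the N-part gives y_(j+1) = y_j + ctrl_j x 2^(jm), and x divides every
  y_j because y_0 = 0. The bound z_j < x is kept by z'_j < x + (2^m - 1) x = 2^m x, and it
  gives y_j < (z_j + 1) 2^(jm) \<le> 2^(jm) x.\<close>

lemma cong_add_inverse_correction:
  fixes M x xinv z d :: int
  assumes "[x * xinv = 1] (mod M)"
  shows "[z + ((xinv * (d - z)) mod M) * x = d] (mod M)"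
proof -
  have "[z + ((xinv * (d - z)) mod M) * x = z + (d - z) * (x * xinv)] (mod M)"
    by (intro cong_add cong_refl) (simp add: cong_def mod_mult_right_eq ac_simps)
  also have "[z + (d - z) * (x * xinv) = z + (d - z) * 1] (mod M)"
    by (intro cong_add cong_mult cong_refl assms)
  finally show ?thesis by simp
qed

lemma div_add_mult_less:
  fixes M x z c :: int
  assumes "0 \<le> z" "z < x" "0 \<le> c" "c < M"
  shows "0 \<le> (z + c * x) div M" "(z + c * x) div M < x"
proof -
  have "c * x \<le> (M - 1) * x"
    using assms by (intro mult_right_mono) auto
  then have "z + c * x < M * x"
    using assms(2) by (simp add: algebra_simps)
  moreover have "M * ((z + c * x) div M) \<le> z + c * x"
    using pos_mod_sign[of M "z + c * x"] assms(3,4) by (simp add: minus_mod_eq_mult_div[symmetric])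
  ultimately have "M * ((z + c * x) div M) < M * x"
    by linarith
  then show "(z + c * x) div M < x"
    by (rule mult_left_less_imp_less) (use assms in linarith)
  show "0 \<le> (z + c * x) div M"
    using assms by (simp add: pos_imp_zdiv_nonneg_iff)
qed

lemma zseq_Suc_ctrl:
  "zseq m N x xminv (Suc j) = (zseq m N x xminv j + ctrl m N x xminv j * x) div 2 ^ m"
  by (simp add: ctrl_def Let_def)

lemma mod_power_Suc_digit:
  "N mod 2 ^ (Suc j * m) = 2 ^ (j * m) * digit m N j + N mod 2 ^ (j * m)"
proof -
  have "(2::int) ^ (Suc j * m) = 2 ^ (j * m) * 2 ^ m"
    by (simp add: power_add)
  then show ?thesis
    unfolding digit_def by (simp add: zmod_zmult2_eq)
qed

lemma yval_Suc:
  fixes N x xminv :: int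
  assumes "[x * xminv = 1] (mod 2 ^ m)"
  shows "yval m N x xminv (Suc j) = yval m N x xminv j + ctrl m N x xminv j * x * 2 ^ (j * m)"
proof -
  define zp where "zp = zseq m N x xminv j + ctrl m N x xminv j * x"
  have "zp mod 2 ^ m = digit m N j mod 2 ^ m"
    using cong_add_inverse_correction[OF assms] unfolding zp_def ctrl_def cong_def .
  then have low_digit: "zp mod 2 ^ m = digit m N j"
    by (simp add: digit_def)
  have "yval m N x xminv (Suc j)
      = 2 ^ (j * m) * (2 ^ m * (zp div 2 ^ m) + zp mod 2 ^ m) + N mod 2 ^ (j * m)"
    unfolding yval_def zseq_Suc_ctrl mod_power_Suc_digit low_digit zp_def[symmetric]
    by (simp add: power_add algebra_simps)
  also have "\<dots> = yval m N x xminv j + ctrl m N x xminv j * x * 2 ^ (j * m)"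
    by (simp add: yval_def zp_def algebra_simps)
  finally show ?thesis .
qed

lemma zseq_bounds:
  fixes N x xminv :: int
  assumes "0 < x"
  shows "0 \<le> zseq m N x xminv j \<and> zseq m N x xminv j < x"
proof (induction j)
  case 0
  show ?case using assms by simp
next
  case (Suc j)
  have "0 \<le> ctrl m N x xminv j" "ctrl m N x xminv j < 2 ^ m"
    by (simp_all add: ctrl_def)
  with Suc.IH show ?case
    unfolding zseq_Suc_ctrl using div_add_mult_less by blast
qed

lemma dvd_yval:
  fixes N x xminv :: int
  assumes "[x * xminv = 1] (mod 2 ^ m)"
  shows "x dvd yval m N x xminv j"
  by (induction j) (simp add: yval_def, simp add: yval_Suc[OF assms])

lemma yval_bounds:
  fixes N x xminv :: int
  assumes "0 < x"
  shows "0 \<le> yval m N x xminv j" "yval m N x xminv j < 2 ^ (j * m) * x"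
proof -
  have z: "0 \<le> zseq m N x xminv j" "zseq m N x xminv j + 1 \<le> x"
    using zseq_bounds[OF assms, of m N xminv j] by simp_all
  then show "0 \<le> yval m N x xminv j"
    by (simp add: yval_def)
  have "yval m N x xminv j < zseq m N x xminv j * 2 ^ (j * m) + 2 ^ (j * m)"
    by (simp add: yval_def)
  also have "\<dots> \<le> x * 2 ^ (j * m)"
    using mult_right_mono[OF z(2), of "2 ^ (j * m)"] by (simp add: distrib_right)
  finally show "yval m N x xminv j < 2 ^ (j * m) * x"
    by (simp add: mult.commute)
qed

theorem lemma4p3:
  fixes m n :: nat and N x xminv :: int
  assumes "0 < m" and "0 < n" and "m dvd n"
    and "0 < N" and "N < 2 ^ n"
    and "0 < x" and "x < 2 ^ m" and "odd x"
    and "0 \<le> xminv" and "xminv < 2 ^ m" and "[x * xminv = 1] (mod 2 ^ m)"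
  shows "\<forall>j \<le> (n - m) div m.
           [yval m N x xminv j = N] (mod 2 ^ (j * m)) \<and>
           0 \<le> yval m N x xminv j \<and> yval m N x xminv j < 2 ^ (j * m) * x \<and>
           x dvd yval m N x xminv j"
proof (intro allI impI conjI)
  fix j
  show "[yval m N x xminv j = N] (mod 2 ^ (j * m))"
    by (simp add: yval_def cong_def)
  show "0 \<le> yval m N x xminv j" "yval m N x xminv j < 2 ^ (j * m) * x"
    using yval_bounds[OF \<open>0 < x\<close>] by blast+
  show "x dvd yval m N x xminv j"
    using dvd_yval[OF \<open>[x * xminv = 1] (mod 2 ^ m)\<close>] .
qed

end
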